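(* Let $r\ge3$ and $Y,Z\subseteq\{1,\dots,r-1\}$ with $0\le|Y|<|Z|<r$. For a finite $\Lambda$ write $\sigma_i(\pm\Lambda)$ where $\sigma_i$ is the map defined by $C_\Lambda$ and $\pm\Lambda=\Lambda\cup-\Lambda$, and let $(i\ i{+}1)$ denote the transposition acting on subsets of $\{1,\dots,r-1\}$. Then: for $i=1,\dots,r-2$: $\sigma_i(\pm\Phi_{r,Z})=\pm\Phi_{r,(i\,i+1)(Z)}$, $\sigma_i(\pm\Psi_{r,Y})=\pm\Psi_{r,(i\,i+1)(Y)}$, $\sigma_i(\pm\Psi'_{r,Y})=\pm\Psi'_{r,(i\,i+1)(Y)}$; if $r-1\notin Z$: $\sigma_{r-1}(\pm\Phi_{r,Z})=\sigma_r(\pm\Phi_{r,Z})=\pm\Phi_{r,Z}$; if $r-1\in Z$: $\sigma_{r-1}(\pm\Phi_{r,Z})=\pm\Psi_{r,Z\setminus\{r-1\}}$ and $\sigma_r(\pm\Phi_{r,Z})=\pm\Psi'_{r,Z\setminus\{r-1\}}$; if $r-1\notin Y$: $\sigma_{r-1}(\pm\Psi_{r,Y})=\pm\Phi_{r,Y\cup\{r-1\}}$, $\sigma_r(\pm\Psi_{r,Y})=\pm\Psi_{r,Y}$, $\sigma_r(\pm\Psi'_{r,Y})=\pm\Phi_{r,Y\cup\{r-1\}}$, $\sigma_{r-1}(\pm\Psi'_{r,Y})=\pm\Psi'_{r,Y}$; if $r-1\in Y$: $\sigma_{r-1}(\pm\Psi_{r,Y})=\sigma_r(\pm\Psi_{r,Y})=\pm\Psi_{r,Y}$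 and $\sigma_{r-1}(\pm\Psi'_{r,Y})=\sigma_r(\pm\Psi'_{r,Y})=\pm\Psi'_{r,Y}$.
   Context: In $\mathbb{Z}^r$ with standard basis $\alpha_1,\dots,\alpha_r$ let $\eta_{i,j}=\sum_{k=i}^j\alpha_k$ for $i\le j$, $\eta_{i,j}=0$ for $i>j$. $\Phi_{r,Z}$ ($Z\subseteq\{1,\dots,r-1\}$) consists of $\eta_{i,j-1}$ ($1\le i<j\le r$), $\eta_{i,r-2}+\alpha_r$ ($1\le i<r$), $\eta_{i,r}+\eta_{j,r-2}$ ($1\le i<j<r$), $\eta_{j,r}+\eta_{j,r-2}$ ($j\in Z$). $\Psi_{r,Y}$ consists of $\eta_{i,j}$ ($1\le i\le j\le r$), $\eta_{i,r}+\eta_{j,r-1}$ ($1\le i<j<r$), $\eta_{j,r}+\eta_{j,r-1}$ ($j\in Y$). $\Psi'_{r,Y}$ is obtained from $\Psi_{r,Y}$ by exchanging the coordinates of $\alpha_{r-1}$ and $\alpha_r$. For finite $\Lambda\subseteq\mathbb{Z}^r$, $C_\Lambda=(c_{ij})$ with $c_{ii}=2$, $c_{ij}=-\max\{k\ge0:k\alpha_i+\alpha_j\in\Lambda\}$ ($i\ne j$), and $\sigma_i:\mathbb{Z}^r\to\mathbb{Z}^r$, $\sigma_i(\alpha_j)=\alpha_j-c_{ij}\alpha_i$. *)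

theory Defs
  imports Main "HOL-Library.Function_Algebras"
begin

text \<open>Vectors of Z^r are modelled as functions nat => int; the coordinate
  of alpha_k is the value at k (k = 1..r); all vectors considered vanish outside 1..r.\<close>

type_synonym vec = "nat \<Rightarrow> int"

definition alpha :: "nat \<Rightarrow> vec" where
  "alpha i = (\<lambda>k. if k = i then 1 else 0)"

definition eta :: "nat \<Rightarrow> nat \<Rightarrow> vec" where
  "eta i j = (\<lambda>n. \<Sum>k\<in>{i..j}. alpha k n)"

definition PhiS :: "nat \<Rightarrow> nat set \<Rightarrow> vec set" where
  "PhiS r Z =
     {eta i (j - 1) | i j. 1 \<le> i \<and> i < j \<and> j \<le> r}
   \<union> {eta i (r - 2) + alpha r | i. 1 \<le> i \<and> i < r}
   \<union> {eta i r + eta j (r - 2) | i j. 1 \<le> i \<and> i < j \<and> j < r}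
   \<union> {eta j r + eta j (r - 2) | j. j \<in> Z}"

definition PsiS :: "nat \<Rightarrow> nat set \<Rightarrow> vec set" where
  "PsiS r Y =
     {eta i j | i j. 1 \<le> i \<and> i \<le> j \<and> j \<le> r}
   \<union> {eta i r + eta j (r - 1) | i j. 1 \<le> i \<and> i < j \<and> j < r}
   \<union> {eta j r + eta j (r - 1) | j. j \<in> Y}"

definition swapc :: "nat \<Rightarrow> vec \<Rightarrow> vec" where
  "swapc r v = (\<lambda>k. if k = r - 1 then v r else if k = r then v (r - 1) else v k)"

definition PsiS' :: "nat \<Rightarrow> nat set \<Rightarrow> vec set" where
  "PsiS' r Y = swapc r ` PsiS r Y"

definition cartan :: "vec set \<Rightarrow> nat \<Rightarrow> nat \<Rightarrow> int" where
  "cartan L i j = (if i = j then 2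
     else - int (Max {k::nat. of_nat k * alpha i + alpha j \<in> L}))"

definition sigma :: "nat \<Rightarrow> vec set \<Rightarrow> nat \<Rightarrow> vec \<Rightarrow> vec" where
  "sigma r L i v = v - (\<lambda>_. \<Sum>j\<in>{1..r}. cartan L i j * v j) * alpha i"

definition pm :: "vec set \<Rightarrow> vec set" where
  "pm L = L \<union> uminus ` L"

definition sigma_pm :: "nat \<Rightarrow> vec set \<Rightarrow> nat \<Rightarrow> vec set" where
  "sigma_pm r L i = sigma r L i ` pm L"

definition transp_set :: "nat \<Rightarrow> nat set \<Rightarrow> nat set" where
  "transp_set i A = (\<lambda>k. if k = i then i + 1 else if k = i + 1 then i else k) ` A"

end

theory Submission
  imports Defs "HOL-Combinatorics.Transposition"
begin

(*
  Each \<sigma>_i changes only the i-th coordinate, is an involution and commutes with negation;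
  hence \<sigma>_i(\<plusminus>A) = \<plusminus>B as soon as \<sigma>_i maps A into \<plusminus>B and B into \<plusminus>A.
  In \<Phi>_{r,Z} and \<Psi>_{r,Y} every \<alpha>_i-string through \<alpha>_j has length at most one, except the
  \<alpha>_{r-1}-string through \<alpha>_r in \<Psi>_{r,Y} when r - 1 \<in> Y, which has length two. So the
  Dynkin diagrams are the chain 1, ..., r - 1 with r attached to r - 2 (and to r - 1 when
  r - 1 \<in> Z), resp. the chain 1, ..., r; this makes every \<sigma>_i explicit, and the two
  inclusions become a check over the explicit shapes of the roots. The statements about \<Psi>'
  and about \<sigma>_r on \<Phi> follow by conjugating with the exchange of the last two coordinates,
  which turns \<sigma>_i into \<sigma>_\<tau>(i) and fixes \<Phi>_{r,Z}.
*)

section \<open>Reflections and their action on symmetric sets\<close>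

lemma alpha_apply [simp]: "alpha i n = (if n = i then 1 else 0)"
  by (simp add: alpha_def)

lemma eta_apply [simp]: "eta i j n = (if i \<le> n \<and> n \<le> j then 1 else 0)"
  by (simp add: eta_def)

lemma in_pmI: "v \<in> L \<Longrightarrow> v \<in> pm L"
  by (simp add: pm_def)

lemma in_pmI_uminus: "- v \<in> L \<Longrightarrow> v \<in> pm L"
  unfolding pm_def by (metis UnI2 image_eqI minus_minus)

lemma sigma_eq_fun_upd:
  "sigma r L i v = v(i := v i - (\<Sum>j\<in>{1..r}. cartan L i j * v j))"
  by (auto simp: sigma_def)

lemma sigma_involution:
  assumes "i \<in> {1..r}"
  shows "sigma r L i (sigma r L i v) = v"
proof -
  define T where "T = (\<Sum>j\<in>{1..r}. cartan L i j * v j)"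
  have sigma_v: "sigma r L i v = v(i := v i - T)"
    by (simp add: sigma_eq_fun_upd T_def)
  have "(\<Sum>j\<in>{1..r}. cartan L i j * (v(i := v i - T)) j)
      = (\<Sum>j\<in>{1..r}. cartan L i j * v j - (if j = i then 2 * T else 0))"
    by (rule sum.cong) (auto simp: cartan_def right_diff_distrib)
  also have "\<dots> = - T"
    using assms by (simp add: sum_subtractf T_def)
  finally have "(\<Sum>j\<in>{1..r}. cartan L i j * (v(i := v i - T)) j) = - T" .
  then show ?thesis
    unfolding sigma_v sigma_eq_fun_upd[of r L i "v(i := v i - T)"] by simp
qed

lemma sigma_uminus: "sigma r L i (- v) = - sigma r L i v"
  by (simp add: sigma_eq_fun_upd sum_negf fun_eq_iff)

lemma image_pm_eq:
  assumes involution: "\<And>v. f (f v) = v" and f_uminus: "\<And>v. f (- v) = - f v"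
    and "\<And>v. v \<in> A \<Longrightarrow> f v \<in> pm B" and "\<And>v. v \<in> B \<Longrightarrow> f v \<in> pm A"
  shows "f ` pm A = pm B"
proof -
  have into: "f ` pm X \<subseteq> pm W" if "\<And>v. v \<in> X \<Longrightarrow> f v \<in> pm W" for X W
    using that f_uminus unfolding pm_def by (fastforce simp: image_iff)
  have "pm B = f ` f ` pm B"
    using involution by (simp add: image_image)
  also have "\<dots> \<subseteq> f ` pm A"
    using into assms(4) by blast
  finally show ?thesis
    using into assms(3) by blast
qed

lemma sigma_pm_eqI:
  assumes "i \<in> {1..r}"
    and "\<And>v. v \<in> L \<Longrightarrow> sigma r L i v \<in> pm M" and "\<And>v. v \<in> M \<Longrightarrow> sigma r L i v \<in> pm L"
  shows "sigma_pm r L i = pm M"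
  unfolding sigma_pm_def
  by (rule image_pm_eq) (use assms sigma_involution sigma_uminus in auto)

lemma sigma_pm_eq_selfI:
  assumes "i \<in> {1..r}" and "\<And>v. v \<in> L \<Longrightarrow> sigma r L i v \<in> pm L"
  shows "sigma_pm r L i = pm L"
  using sigma_pm_eqI[OF assms(1) assms(2) assms(2)] .

lemma cartan_eq_string_length:
  assumes "i \<noteq> j" and "\<And>k. of_nat k * alpha i + alpha j \<in> L \<longleftrightarrow> k \<le> m"
  shows "cartan L i j = - int m"
proof -
  have "{k. of_nat k * alpha i + alpha j \<in> L} = {..m}"
    using assms(2) by auto
  moreover have "Max {..m} = m"
    by (rule Max_eqI) auto
  ultimately show ?thesis
    using assms(1) by (simp add: cartan_def)
qed

lemma string_comp_transpose:
  "(of_nat k * alpha i + alpha j) \<circ> transpose a b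
    = of_nat k * alpha (transpose a b i) + alpha (transpose a b j)"
  by (auto simp: fun_eq_iff transpose_def)

lemma mem_image_comp_transpose_iff:
  "w \<in> (\<lambda>v. v \<circ> transpose a b) ` L \<longleftrightarrow> w \<circ> transpose a b \<in> L"
proof
  assume "w \<circ> transpose a b \<in> L"
  moreover have "w = (w \<circ> transpose a b) \<circ> transpose a b"
    by (simp add: comp_assoc)
  ultimately show "w \<in> (\<lambda>v. v \<circ> transpose a b) ` L"
    by blast
qed (auto simp: comp_assoc)

lemma cartan_image_comp_transpose:
  "cartan ((\<lambda>v. v \<circ> transpose a b) ` L) i j = cartan L (transpose a b i) (transpose a b j)"
  by (simp add: cartan_def mem_image_comp_transpose_iff string_comp_transpose inj_eq[OF inj_transpose])

lemma sigma_image_comp_transpose: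
  assumes "a \<in> {1..r}" "b \<in> {1..r}"
  shows "sigma r ((\<lambda>v. v \<circ> transpose a b) ` L) i (v \<circ> transpose a b)
    = sigma r L (transpose a b i) v \<circ> transpose a b"
proof -
  have "(\<Sum>j\<in>{1..r}. cartan ((\<lambda>v. v \<circ> transpose a b) ` L) i j * (v \<circ> transpose a b) j)
      = (\<Sum>j\<in>{1..r}. cartan L (transpose a b i) j * v j)"
    unfolding cartan_image_comp_transpose
    by (rule sum.reindex_bij_witness[of _ "transpose a b" "transpose a b"])
      (use assms in \<open>auto simp: transpose_def\<close>)
  then show ?thesis
    by (auto simp: sigma_eq_fun_upd fun_eq_iff inj_eq[OF inj_transpose])
qed

lemma pm_image_comp: "pm ((\<lambda>v. v \<circ> t) ` L) = (\<lambda>v. v \<circ> t) ` pm L"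
proof -
  have "(- v) \<circ> t = - (v \<circ> t)" for v :: vec
    by (simp add: fun_eq_iff)
  then show ?thesis
    by (simp add: pm_def image_Un image_image)
qed

lemma sigma_pm_image_comp_transpose:
  assumes "a \<in> {1..r}" "b \<in> {1..r}"
  shows "sigma_pm r ((\<lambda>v. v \<circ> transpose a b) ` L) i
    = (\<lambda>v. v \<circ> transpose a b) ` sigma_pm r L (transpose a b i)"
  by (simp add: sigma_pm_def pm_image_comp image_image sigma_image_comp_transpose[OF assms])

section \<open>The root shapes\<close>

text \<open>Throughout, \<open>r = q + 2\<close>, so that \<open>r - 1 = q + 1\<close> and \<open>r - 2 = q\<close> involve no truncated
  subtraction.\<close>

lemma PsiS_cases [consumes 1, case_names interval mixed double]:
  assumes "v \<in> PsiS (q+2) Y"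
  obtains a b where "1 \<le> a" "a \<le> b" "b \<le> q+2" "v = eta a b"
  | a c where "1 \<le> a" "a < c" "c \<le> q+1" "v = eta a (q+2) + eta c (q+1)"
  | c where "c \<in> Y" "v = eta c (q+2) + eta c (q+1)"
  using assms unfolding PsiS_def by (auto simp: less_Suc_eq_le)

lemma PhiS_cases [consumes 1, case_names interval tip mixed double]:
  assumes "v \<in> PhiS (q+2) Z"
  obtains a b where "1 \<le> a" "a \<le> b" "b \<le> q+1" "v = eta a b"
  | a where "1 \<le> a" "a \<le> q+1" "v = eta a q + alpha (q+2)"
  | a c where "1 \<le> a" "a < c" "c \<le> q+1" "v = eta a (q+2) + eta c q"
  | c where "c \<in> Z" "v = eta c (q+2) + eta c q"
proof -
  consider i j where "1 \<le> i" "i < j" "j \<le> q+2" "v = eta i (j-1)"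
    | a where "1 \<le> a" "a \<le> q+1" "v = eta a q + alpha (q+2)"
    | a c where "1 \<le> a" "a < c" "c \<le> q+1" "v = eta a (q+2) + eta c q"
    | c where "c \<in> Z" "v = eta c (q+2) + eta c q"
    using assms unfolding PhiS_def by (auto simp: less_Suc_eq_le)
  then show thesis
  proof cases
    case (1 i j)
    then show thesis using that(1)[of i "j - 1"] by auto
  qed (use that in auto)
qed

lemma PsiS_intervalI:
  assumes "1 \<le> a" "a \<le> b" "b \<le> q+2" "\<And>n. v n = (if a \<le> n \<and> n \<le> b then 1 else 0)"
  shows "v \<in> PsiS (q+2) Y"
proof -
  have "v = eta a b" using assms(4) by (simp add: fun_eq_iff)
  then show ?thesis using assms(1-3) unfolding PsiS_def by auto
qed

lemma PsiS_mixedI: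
  assumes "1 \<le> a" "a < c" "c \<le> q+1"
    "\<And>n. v n = (if a \<le> n \<and> n \<le> q+2 then 1 else 0) + (if c \<le> n \<and> n \<le> q+1 then 1 else 0)"
  shows "v \<in> PsiS (q+2) Y"
proof -
  have "v = eta a (q+2) + eta c (q+1)" using assms(4) by (simp add: fun_eq_iff)
  then show ?thesis using assms(1-3) unfolding PsiS_def by (auto simp: less_Suc_eq_le)
qed

lemma PsiS_doubleI:
  assumes "c \<in> Y"
    "\<And>n. v n = (if c \<le> n \<and> n \<le> q+2 then 1 else 0) + (if c \<le> n \<and> n \<le> q+1 then 1 else 0)"
  shows "v \<in> PsiS (q+2) Y"
proof -
  have "v = eta c (q+2) + eta c (q+1)" using assms(2) by (simp add: fun_eq_iff)
  then show ?thesis using assms(1) unfolding PsiS_def by (auto simp: less_Suc_eq_le)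
qed

lemma PhiS_intervalI:
  assumes "1 \<le> a" "a \<le> b" "b \<le> q+1" "\<And>n. v n = (if a \<le> n \<and> n \<le> b then 1 else 0)"
  shows "v \<in> PhiS (q+2) Z"
proof -
  have "v = eta a (Suc b - 1)" "a < Suc b" "Suc b \<le> q+2"
    using assms by (simp_all add: fun_eq_iff)
  then show ?thesis using assms(1) unfolding PhiS_def by blast
qed

lemma PhiS_tipI:
  assumes "1 \<le> a" "a \<le> q+1" "\<And>n. v n = (if a \<le> n \<and> n \<le> q then 1 else 0) + (if n = q+2 then 1 else 0)"
  shows "v \<in> PhiS (q+2) Z"
proof -
  have "v = eta a q + alpha (q+2)" using assms(3) by (simp add: fun_eq_iff)
  then show ?thesis using assms(1-2) unfolding PhiS_def by (auto simp: less_Suc_eq_le)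
qed

lemma PhiS_mixedI:
  assumes "1 \<le> a" "a < c" "c \<le> q+1"
    "\<And>n. v n = (if a \<le> n \<and> n \<le> q+2 then 1 else 0) + (if c \<le> n \<and> n \<le> q then 1 else 0)"
  shows "v \<in> PhiS (q+2) Z"
proof -
  have "v = eta a (q+2) + eta c q" using assms(4) by (simp add: fun_eq_iff)
  then show ?thesis using assms(1-3) unfolding PhiS_def by (auto simp: less_Suc_eq_le)
qed

lemma PhiS_doubleI:
  assumes "c \<in> Z"
    "\<And>n. v n = (if c \<le> n \<and> n \<le> q+2 then 1 else 0) + (if c \<le> n \<and> n \<le> q then 1 else 0)"
  shows "v \<in> PhiS (q+2) Z"
proof -
  have "v = eta c (q+2) + eta c q" using assms(2) by (simp add: fun_eq_iff)
  then show ?thesis using assms(1) unfolding PhiS_def by (auto simp: less_Suc_eq_le)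
qed

section \<open>Cartan matrices and the reflections\<close>

lemma string_in_PsiS_iff:
  assumes "i \<noteq> j" "i \<in> {1..q+2}" "j \<in> {1..q+2}"
  shows "of_nat k * alpha i + alpha j \<in> PsiS (q+2) Y \<longleftrightarrow>
    k = 0 \<or> k = 1 \<and> (j = i+1 \<or> i = j+1) \<or> k = 2 \<and> i = q+1 \<and> j = q+2 \<and> q+1 \<in> Y"
proof
  assume "of_nat k * alpha i + alpha j \<in> PsiS (q+2) Y"
  then show "k = 0 \<or> k = 1 \<and> (j = i+1 \<or> i = j+1) \<or> k = 2 \<and> i = q+1 \<and> j = q+2 \<and> q+1 \<in> Y"
  proof (cases rule: PsiS_cases)
    case (interval a b)
    then have "(of_nat k * alpha i + alpha j :: vec) n = eta a b n" for n
      by simp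
    from this[of i] this[of j] this[of "i+1"] this[of "j+1"] show ?thesis
      using assms(1) by (auto split: if_splits)
  next
    case (mixed a c)
    then have "(of_nat k * alpha i + alpha j :: vec) n = (eta a (q+2) + eta c (q+1)) n" for n
      by simp
    from this[of a] this[of "q+1"] this[of "q+2"] show ?thesis
      using mixed(1-3) by (auto split: if_splits)
  next
    case (double c)
    then have "(of_nat k * alpha i + alpha j :: vec) n = (eta c (q+2) + eta c (q+1)) n" for n
      by simp
    from this[of i] this[of j] this[of c] this[of "q+1"] this[of "q+2"] show ?thesis
      using double(1) assms by (auto split: if_splits)
  qed
next
  assume "k = 0 \<or> k = 1 \<and> (j = i+1 \<or> i = j+1) \<or> k = 2 \<and> i = q+1 \<and> j = q+2 \<and> q+1 \<in> Y"
  then consider "k = 0" | "k = 1" "j = i+1" | "k = 1" "i = j+1" | "k = 2" "i = q+1" "j = q+2" "q+1 \<in> Y"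
    by blast
  then show "of_nat k * alpha i + alpha j \<in> PsiS (q+2) Y"
  proof cases
    case 1 then show ?thesis using assms by (intro PsiS_intervalI[of j j]) auto
  next
    case 2 then show ?thesis using assms by (intro PsiS_intervalI[of i j]) auto
  next
    case 3 then show ?thesis using assms by (intro PsiS_intervalI[of j i]) auto
  next
    case 4 then show ?thesis using assms by (intro PsiS_doubleI[of "q+1"]) auto
  qed
qed

definition Phi_adjacent :: "nat \<Rightarrow> nat set \<Rightarrow> nat \<Rightarrow> nat \<Rightarrow> bool" where
  "Phi_adjacent q Z i j \<longleftrightarrow>
     j = i+1 \<and> j \<le> q+1 \<or> i = j+1 \<and> i \<le> q+1 \<or> i = q \<and> j = q+2 \<or> j = q \<and> i = q+2
     \<or> q+1 \<in> Z \<and> (i = q+1 \<and> j = q+2 \<or> j = q+1 \<and> i = q+2)"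

lemma string_in_PhiS_iff:
  assumes "i \<noteq> j" "i \<in> {1..q+2}" "j \<in> {1..q+2}" "1 \<le> q" "Z \<subseteq> {1..q+1}"
  shows "of_nat k * alpha i + alpha j \<in> PhiS (q+2) Z \<longleftrightarrow> k = 0 \<or> k = 1 \<and> Phi_adjacent q Z i j"
proof
  assume "of_nat k * alpha i + alpha j \<in> PhiS (q+2) Z"
  then show "k = 0 \<or> k = 1 \<and> Phi_adjacent q Z i j"
  proof (cases rule: PhiS_cases)
    case (interval a b)
    then have "(of_nat k * alpha i + alpha j :: vec) n = eta a b n" for n
      by simp
    from this[of i] this[of j] this[of "i+1"] this[of "j+1"] show ?thesis
      using assms(1) interval(1-3) unfolding Phi_adjacent_def by (auto split: if_splits)
  next
    case (tip a)
    then have "(of_nat k * alpha i + alpha j :: vec) n = (eta a q + alpha (q+2)) n" for n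
      by simp
    from this[of i] this[of j] this[of a] this[of "a+1"] this[of q] this[of "q+2"] show ?thesis
      using assms(1,4) tip(1,2) unfolding Phi_adjacent_def by (auto split: if_splits)
  next
    case (mixed a c)
    then have "(of_nat k * alpha i + alpha j :: vec) n = (eta a (q+2) + eta c q) n" for n
      by simp
    from this[of a] this[of "q+1"] this[of "q+2"] show ?thesis
      using mixed(1-3) by (auto split: if_splits)
  next
    case (double c)
    then have e: "(of_nat k * alpha i + alpha j :: vec) n = (eta c (q+2) + eta c q) n" for n
      by simp
    have "c = q+1"
    proof (rule ccontr)
      assume "c \<noteq> q+1"
      then have "c \<le> q"
        using double(1) assms(5) by auto
      with e[of c] e[of "q+1"] e[of "q+2"] show False
        using assms(1) by (simp split: if_splits)
    qed
    then have "(of_nat k * alpha i + alpha j :: vec) n = (alpha (q+1) + alpha (q+2)) n" for n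
      using e[of n] by simp
    from this[of i] this[of j] this[of "q+1"] this[of "q+2"]
    have "k = 1 \<and> (i = q+1 \<and> j = q+2 \<or> j = q+1 \<and> i = q+2)"
      using assms(1) by (simp split: if_splits)
    with \<open>c = q+1\<close> double(1) show ?thesis
      unfolding Phi_adjacent_def by blast
  qed
next
  assume "k = 0 \<or> k = 1 \<and> Phi_adjacent q Z i j"
  then consider "k = 0" "j \<le> q+1" | "k = 0" "j = q+2" | "k = 1" "j = i+1" "j \<le> q+1"
    | "k = 1" "i = j+1" "i \<le> q+1" | "k = 1" "i = q" "j = q+2" | "k = 1" "j = q" "i = q+2"
    | "k = 1" "q+1 \<in> Z" "i = q+1" "j = q+2" | "k = 1" "q+1 \<in> Z" "j = q+1" "i = q+2"
    using assms(3) unfolding Phi_adjacent_def by (elim disjE conjE) (auto simp: le_Suc_eq)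
  then show "of_nat k * alpha i + alpha j \<in> PhiS (q+2) Z"
  proof cases
    case 1 then show ?thesis using assms by (intro PhiS_intervalI[of j j]) auto
  next
    case 2 then show ?thesis using assms by (intro PhiS_tipI[of "q+1"]) auto
  next
    case 3 then show ?thesis using assms by (intro PhiS_intervalI[of i j]) auto
  next
    case 4 then show ?thesis using assms by (intro PhiS_intervalI[of j i]) auto
  next
    case 5 then show ?thesis using assms by (intro PhiS_tipI[of q]) auto
  next
    case 6 then show ?thesis using assms by (intro PhiS_tipI[of q]) auto
  next
    case 7 then show ?thesis using assms by (intro PhiS_doubleI[of "q+1"]) auto
  next
    case 8 then show ?thesis using assms by (intro PhiS_doubleI[of "q+1"]) auto
  qed
qed

lemma cartan_PsiS:
  assumes "i \<in> {1..q+2}" "j \<in> {1..q+2}"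
  shows "cartan (PsiS (q+2) Y) i j =
    (if i = j then 2 else if i = q+1 \<and> j = q+2 \<and> q+1 \<in> Y then -2
     else if j = i+1 \<or> i = j+1 then -1 else 0)"
proof (cases "i = j")
  case False
  define m :: nat where
    "m = (if i = q+1 \<and> j = q+2 \<and> q+1 \<in> Y then 2 else if j = i+1 \<or> i = j+1 then 1 else 0)"
  have "cartan (PsiS (q+2) Y) i j = - int m"
  proof (rule cartan_eq_string_length[OF False])
    show "of_nat k * alpha i + alpha j \<in> PsiS (q+2) Y \<longleftrightarrow> k \<le> m" for k
      unfolding string_in_PsiS_iff[OF False assms] m_def by auto
  qed
  then show ?thesis
    using False by (simp add: m_def)
qed (simp add: cartan_def)

lemma cartan_PhiS:
  assumes "i \<in> {1..q+2}" "j \<in> {1..q+2}" "1 \<le> q" "Z \<subseteq> {1..q+1}"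
  shows "cartan (PhiS (q+2) Z) i j = (if i = j then 2 else if Phi_adjacent q Z i j then -1 else 0)"
proof (cases "i = j")
  case False
  define m :: nat where "m = (if Phi_adjacent q Z i j then 1 else 0)"
  have "cartan (PhiS (q+2) Z) i j = - int m"
  proof (rule cartan_eq_string_length[OF False])
    show "of_nat k * alpha i + alpha j \<in> PhiS (q+2) Z \<longleftrightarrow> k \<le> m" for k
      unfolding string_in_PhiS_iff[OF False assms] m_def by auto
  qed
  then show ?thesis
    using False by (simp add: m_def)
qed (simp add: cartan_def)

lemma sum_sparse_row:
  fixes c v :: "nat \<Rightarrow> int"
  assumes "finite A"
    and "\<And>j. j \<in> A \<Longrightarrow> c j = (if j = i then 2 else 0)
      - (if j = p1 then w1 else 0) - (if j = p2 then w2 else 0) - (if j = p3 then w3 else 0)"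
  shows "(\<Sum>j\<in>A. c j * v j) = (if i \<in> A then 2 * v i else 0)
      - (if p1 \<in> A then w1 * v p1 else 0) - (if p2 \<in> A then w2 * v p2 else 0) - (if p3 \<in> A then w3 * v p3 else 0)"
proof -
  have "(\<Sum>j\<in>A. c j * v j) = (\<Sum>j\<in>A. (if j = i then 2 * v i else 0)
      - (if j = p1 then w1 * v p1 else 0) - (if j = p2 then w2 * v p2 else 0) - (if j = p3 then w3 * v p3 else 0))"
    by (rule sum.cong) (simp_all add: assms(2) left_diff_distrib)
  also have "\<dots> = (if i \<in> A then 2 * v i else 0)
      - (if p1 \<in> A then w1 * v p1 else 0) - (if p2 \<in> A then w2 * v p2 else 0) - (if p3 \<in> A then w3 * v p3 else 0)"
    using assms(1) by (simp only: sum_subtractf sum.delta)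
  finally show ?thesis .
qed

text \<open>The reflected index is written \<open>h + 1\<close>; its left neighbour \<open>h\<close> does not exist for
  \<open>h = 0\<close>, and \<open>v 0\<close> need not vanish for an arbitrary \<open>v\<close>.\<close>

lemma sigma_PsiS_chain:
  assumes "h+1 \<le> q"
  shows "sigma (q+2) (PsiS (q+2) Y) (h+1) v = v(h+1 := (if h = 0 then 0 else v h) + v (h+2) - v (h+1))"
proof -
  have row: "(\<Sum>j\<in>{1..q+2}. cartan (PsiS (q+2) Y) (h+1) j * v j)
      = (if h+1 \<in> {1..q+2} then 2 * v (h+1) else 0) - (if h+2 \<in> {1..q+2} then 1 * v (h+2) else 0)
        - (if h \<in> {1..q+2} then 1 * v h else 0) - (if h \<in> {1..q+2} then 0 * v h else 0)"
    by (rule sum_sparse_row) (simp, subst cartan_PsiS, use assms in auto)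
  show ?thesis
    using assms unfolding sigma_eq_fun_upd row by (auto simp: fun_eq_iff)
qed

lemma sigma_PsiS_penultimate:
  assumes "1 \<le> q"
  shows "sigma (q+2) (PsiS (q+2) Y) (q+1) v =
    v(q+1 := v q + (if q+1 \<in> Y then 2 else 1) * v (q+2) - v (q+1))"
proof -
  have row: "(\<Sum>j\<in>{1..q+2}. cartan (PsiS (q+2) Y) (q+1) j * v j)
      = (if q+1 \<in> {1..q+2} then 2 * v (q+1) else 0)
        - (if q+2 \<in> {1..q+2} then (if q+1 \<in> Y then 2 else 1) * v (q+2) else 0)
        - (if q \<in> {1..q+2} then 1 * v q else 0) - (if q \<in> {1..q+2} then 0 * v q else 0)"
    by (rule sum_sparse_row) (simp, subst cartan_PsiS, use assms in auto)
  show ?thesis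
    using assms unfolding sigma_eq_fun_upd row by (auto simp: fun_eq_iff)
qed

lemma sigma_PsiS_last:
  "sigma (q+2) (PsiS (q+2) Y) (q+2) v = v(q+2 := v (q+1) - v (q+2))"
proof -
  have row: "(\<Sum>j\<in>{1..q+2}. cartan (PsiS (q+2) Y) (q+2) j * v j)
      = (if q+2 \<in> {1..q+2} then 2 * v (q+2) else 0) - (if q+1 \<in> {1..q+2} then 1 * v (q+1) else 0)
        - (if q \<in> {1..q+2} then 0 * v q else 0) - (if q \<in> {1..q+2} then 0 * v q else 0)"
    by (rule sum_sparse_row) (simp, subst cartan_PsiS, auto)
  show ?thesis
    unfolding sigma_eq_fun_upd row by (auto simp: fun_eq_iff)
qed

lemma sigma_PhiS_chain:
  assumes "h+2 \<le> q" "Z \<subseteq> {1..q+1}"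
  shows "sigma (q+2) (PhiS (q+2) Z) (h+1) v = v(h+1 := (if h = 0 then 0 else v h) + v (h+2) - v (h+1))"
proof -
  have row: "(\<Sum>j\<in>{1..q+2}. cartan (PhiS (q+2) Z) (h+1) j * v j)
      = (if h+1 \<in> {1..q+2} then 2 * v (h+1) else 0) - (if h+2 \<in> {1..q+2} then 1 * v (h+2) else 0)
        - (if h \<in> {1..q+2} then 1 * v h else 0) - (if h \<in> {1..q+2} then 0 * v h else 0)"
    by (rule sum_sparse_row) (simp, subst cartan_PhiS, use assms in \<open>auto simp: Phi_adjacent_def\<close>)
  show ?thesis
    using assms unfolding sigma_eq_fun_upd row by (auto simp: fun_eq_iff)
qed

lemma sigma_PhiS_branch:
  assumes "q = h+1" "Z \<subseteq> {1..q+1}"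
  shows "sigma (q+2) (PhiS (q+2) Z) (h+1) v =
    v(h+1 := (if h = 0 then 0 else v h) + v (h+2) + v (q+2) - v (h+1))"
proof -
  have row: "(\<Sum>j\<in>{1..q+2}. cartan (PhiS (q+2) Z) (h+1) j * v j)
      = (if h+1 \<in> {1..q+2} then 2 * v (h+1) else 0) - (if h+2 \<in> {1..q+2} then 1 * v (h+2) else 0)
        - (if h \<in> {1..q+2} then 1 * v h else 0) - (if q+2 \<in> {1..q+2} then 1 * v (q+2) else 0)"
    by (rule sum_sparse_row) (simp, subst cartan_PhiS, use assms in \<open>auto simp: Phi_adjacent_def\<close>)
  show ?thesis
    using assms unfolding sigma_eq_fun_upd row by (auto simp: fun_eq_iff)
qed

lemma sigma_PhiS_penultimate:
  assumes "1 \<le> q" "Z \<subseteq> {1..q+1}"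
  shows "sigma (q+2) (PhiS (q+2) Z) (q+1) v =
    v(q+1 := v q + (if q+1 \<in> Z then v (q+2) else 0) - v (q+1))"
proof -
  have row: "(\<Sum>j\<in>{1..q+2}. cartan (PhiS (q+2) Z) (q+1) j * v j)
      = (if q+1 \<in> {1..q+2} then 2 * v (q+1) else 0)
        - (if q+2 \<in> {1..q+2} then (if q+1 \<in> Z then 1 else 0) * v (q+2) else 0)
        - (if q \<in> {1..q+2} then 1 * v q else 0) - (if q \<in> {1..q+2} then 0 * v q else 0)"
    by (rule sum_sparse_row) (simp, subst cartan_PhiS, use assms in \<open>auto simp: Phi_adjacent_def\<close>)
  show ?thesis
    using assms unfolding sigma_eq_fun_upd row by (auto simp: fun_eq_iff)
qed

lemma transp_set_eq_transpose_image: "transp_set i A = transpose i (i+1) ` A"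
  by (simp add: transp_set_def transpose_def)

lemma mem_transp_set_iff [simp]: "x \<in> transp_set i A \<longleftrightarrow> transpose i (i+1) x \<in> A"
  by (simp add: transp_set_eq_transpose_image in_transpose_image_iff)

lemma transp_set_involution: "transp_set i (transp_set i A) = A"
  by (simp add: transp_set_eq_transpose_image image_image)

lemma transp_set_subset:
  assumes "A \<subseteq> {1..n}" "1 \<le> i" "i < n"
  shows "transp_set i A \<subseteq> {1..n}"
  using assms by (auto simp: transp_set_eq_transpose_image transpose_def)

lemma PsiS_chain_reflection:
  assumes "v \<in> PsiS (q+2) Y" "h+1 \<le> q" "Y \<subseteq> {1..q+1}"
  shows "v(h+1 := (if h = 0 then 0 else v h) + v (h+2) - v (h+1)) \<in> pm (PsiS (q+2) (transp_set (h+1) Y))"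
  using assms(1)
proof (cases rule: PsiS_cases)
  case (interval a b)
  consider "a = h+2" | "b = h" | "a = h+1" "b = h+1" | "a = h+1" "h+1 < b" | "a < h+1" "b = h+1"
    | "h+2 < a \<or> b < h \<or> a \<le> h \<and> h+2 \<le> b"
    using interval by linarith
  then show ?thesis
  proof cases
    case 1 with interval assms(2) show ?thesis by (intro in_pmI PsiS_intervalI[of "h+1" b]) auto
  next
    case 2 with interval assms(2) show ?thesis by (intro in_pmI PsiS_intervalI[of a "h+1"]) auto
  next
    case 3 with interval assms(2) show ?thesis by (intro in_pmI_uminus PsiS_intervalI[of "h+1" "h+1"]) auto
  next
    case 4 with interval assms(2) show ?thesis by (intro in_pmI PsiS_intervalI[of "h+2" b]) auto
  next
    case 5 with interval assms(2) show ?thesis by (intro in_pmI PsiS_intervalI[of a h]) auto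
  next
    case 6 with interval assms(2) show ?thesis by (intro in_pmI PsiS_intervalI[of a b]) auto
  qed
next
  case (mixed a c)
  consider "a = h+2" | "a = h+1" "h+2 < c" | "a = h+1" "c = h+2" | "a < h+1" "c = h+2" | "c = h+1"
    | "a \<noteq> h+2" "a \<noteq> h+1" "c \<noteq> h+2" "c \<noteq> h+1"
    using mixed by linarith
  then show ?thesis
  proof cases
    case 1 with mixed assms(2) show ?thesis by (intro in_pmI PsiS_mixedI[of "h+1" c]) auto
  next
    case 2 with mixed assms(2) show ?thesis by (intro in_pmI PsiS_mixedI[of "h+2" c]) auto
  next
    case 3 with mixed assms(2) show ?thesis by (intro in_pmI PsiS_mixedI[of a c]) auto
  next
    case 4 with mixed assms(2) show ?thesis by (intro in_pmI PsiS_mixedI[of a "h+1"]) auto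
  next
    case 5 with mixed assms(2) show ?thesis by (intro in_pmI PsiS_mixedI[of a "h+2"]) auto
  next
    case 6 with mixed assms(2) show ?thesis by (intro in_pmI PsiS_mixedI[of a c]) auto
  qed
next
  case (double c)
  have "1 \<le> c" "c \<le> q+1"
    using double(1) assms(3) by auto
  with double consider "c = h+2" | "c = h+1" | "c \<noteq> h+2" "c \<noteq> h+1"
    by blast
  then show ?thesis
  proof cases
    case 1 with double assms(2) show ?thesis by (intro in_pmI PsiS_doubleI[of "h+1"]) auto
  next
    case 2 with double assms(2) show ?thesis by (intro in_pmI PsiS_doubleI[of "h+2"]) auto
  next
    case 3 with double assms(2) \<open>1 \<le> c\<close> show ?thesis by (intro in_pmI PsiS_doubleI[of c]) auto
  qed
qed

lemma PhiS_chain_reflection: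
  assumes "v \<in> PhiS (q+2) Z" "h+2 \<le> q" "Z \<subseteq> {1..q+1}"
  shows "v(h+1 := (if h = 0 then 0 else v h) + v (h+2) - v (h+1)) \<in> pm (PhiS (q+2) (transp_set (h+1) Z))"
  using assms(1)
proof (cases rule: PhiS_cases)
  case (interval a b)
  consider "a = h+2" | "b = h" | "a = h+1" "b = h+1" | "a = h+1" "h+1 < b" | "a < h+1" "b = h+1"
    | "h+2 < a \<or> b < h \<or> a \<le> h \<and> h+2 \<le> b"
    using interval by linarith
  then show ?thesis
  proof cases
    case 1 with interval assms(2) show ?thesis by (intro in_pmI PhiS_intervalI[of "h+1" b]) auto
  next
    case 2 with interval assms(2) show ?thesis by (intro in_pmI PhiS_intervalI[of a "h+1"]) auto
  next
    case 3 with interval assms(2) show ?thesis by (intro in_pmI_uminus PhiS_intervalI[of "h+1" "h+1"]) auto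
  next
    case 4 with interval assms(2) show ?thesis by (intro in_pmI PhiS_intervalI[of "h+2" b]) auto
  next
    case 5 with interval assms(2) show ?thesis by (intro in_pmI PhiS_intervalI[of a h]) auto
  next
    case 6 with interval assms(2) show ?thesis by (intro in_pmI PhiS_intervalI[of a b]) auto
  qed
next
  case (tip a)
  consider "a = h+2" | "a = h+1" | "a \<noteq> h+2" "a \<noteq> h+1"
    by blast
  then show ?thesis
  proof cases
    case 1 with tip assms(2) show ?thesis by (intro in_pmI PhiS_tipI[of "h+1"]) auto
  next
    case 2 with tip assms(2) show ?thesis by (intro in_pmI PhiS_tipI[of "h+2"]) auto
  next
    case 3 with tip assms(2) show ?thesis by (intro in_pmI PhiS_tipI[of a]) auto
  qed
next
  case (mixed a c)
  consider "a = h+2" | "a = h+1" "h+2 < c" | "a = h+1" "c = h+2" | "a < h+1" "c = h+2" | "c = h+1"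
    | "a \<noteq> h+2" "a \<noteq> h+1" "c \<noteq> h+2" "c \<noteq> h+1"
    using mixed by linarith
  then show ?thesis
  proof cases
    case 1 with mixed assms(2) show ?thesis by (intro in_pmI PhiS_mixedI[of "h+1" c]) auto
  next
    case 2 with mixed assms(2) show ?thesis by (intro in_pmI PhiS_mixedI[of "h+2" c]) auto
  next
    case 3 with mixed assms(2) show ?thesis by (intro in_pmI PhiS_mixedI[of a c]) auto
  next
    case 4 with mixed assms(2) show ?thesis by (intro in_pmI PhiS_mixedI[of a "h+1"]) auto
  next
    case 5 with mixed assms(2) show ?thesis by (intro in_pmI PhiS_mixedI[of a "h+2"]) auto
  next
    case 6 with mixed assms(2) show ?thesis by (intro in_pmI PhiS_mixedI[of a c]) auto
  qed
next
  case (double c)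
  have "1 \<le> c" "c \<le> q+1"
    using double(1) assms(3) by auto
  with double consider "c = h+2" | "c = h+1" | "c \<noteq> h+2" "c \<noteq> h+1"
    by blast
  then show ?thesis
  proof cases
    case 1 with double assms(2) show ?thesis by (intro in_pmI PhiS_doubleI[of "h+1"]) auto
  next
    case 2 with double assms(2) show ?thesis by (intro in_pmI PhiS_doubleI[of "h+2"]) auto
  next
    case 3 with double assms(2) \<open>1 \<le> c\<close> show ?thesis by (intro in_pmI PhiS_doubleI[of c]) auto
  qed
qed

lemma PhiS_branch_reflection:
  assumes "v \<in> PhiS (q+2) Z" "q = h+1" "Z \<subseteq> {1..q+1}"
  shows "v(h+1 := (if h = 0 then 0 else v h) + v (h+2) + v (q+2) - v (h+1))
    \<in> pm (PhiS (q+2) (transp_set (h+1) Z))"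
  using assms(1)
proof (cases rule: PhiS_cases)
  case (interval a b)
  consider "a = h+2" | "b = h" | "a = h+1" "b = h+1" | "a = h+1" "b = h+2" | "a < h+1" "b = h+1"
    | "a \<le> h" "b = h+2" | "b < h"
    using interval assms(2) by linarith
  then show ?thesis
  proof cases
    case 1 with interval assms(2) show ?thesis by (intro in_pmI PhiS_intervalI[of "h+1" "h+2"]) auto
  next
    case 2 with interval assms(2) show ?thesis by (intro in_pmI PhiS_intervalI[of a "h+1"]) auto
  next
    case 3 with interval assms(2) show ?thesis by (intro in_pmI_uminus PhiS_intervalI[of "h+1" "h+1"]) auto
  next
    case 4 with interval assms(2) show ?thesis by (intro in_pmI PhiS_intervalI[of "h+2" "h+2"]) auto
  next
    case 5 with interval assms(2) show ?thesis by (intro in_pmI PhiS_intervalI[of a h]) auto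
  next
    case 6 with interval assms(2) show ?thesis by (intro in_pmI PhiS_intervalI[of a b]) auto
  next
    case 7 with interval assms(2) show ?thesis by (intro in_pmI PhiS_intervalI[of a b]) auto
  qed
next
  case (tip a)
  consider "a = h+2" | "a = h+1" | "a \<le> h"
    using tip assms(2) by linarith
  then show ?thesis
  proof cases
    case 1 with tip assms(2) show ?thesis by (intro in_pmI PhiS_tipI[of "h+1"]) auto
  next
    case 2 with tip assms(2) show ?thesis by (intro in_pmI PhiS_tipI[of "h+2"]) auto
  next
    case 3 with tip assms(2) show ?thesis by (intro in_pmI PhiS_tipI[of a]) auto
  qed
next
  case (mixed a c)
  consider "c = h+2" "a = h+1" | "c = h+2" "a \<le> h" | "c = h+1" | "c \<le> h"
    using mixed assms(2) by linarith
  then show ?thesis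
  proof cases
    case 1 with mixed assms(2) show ?thesis by (intro in_pmI PhiS_mixedI[of a c]) auto
  next
    case 2 with mixed assms(2) show ?thesis by (intro in_pmI PhiS_mixedI[of a "h+1"]) auto
  next
    case 3 with mixed assms(2) show ?thesis by (intro in_pmI PhiS_mixedI[of a "h+2"]) auto
  next
    case 4 with mixed assms(2) show ?thesis by (intro in_pmI PhiS_mixedI[of a c]) auto
  qed
next
  case (double c)
  have "1 \<le> c" "c \<le> h+2"
    using double(1) assms(2,3) by auto
  then consider "c = h+2" | "c = h+1" | "c \<le> h"
    by linarith
  then show ?thesis
  proof cases
    case 1 with double assms(2) show ?thesis by (intro in_pmI PhiS_doubleI[of "h+1"]) auto
  next
    case 2 with double assms(2) show ?thesis by (intro in_pmI PhiS_doubleI[of "h+2"]) auto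
  next
    case 3 with double assms(2) \<open>1 \<le> c\<close> show ?thesis by (intro in_pmI PhiS_doubleI[of c]) auto
  qed
qed

lemma PhiS_penultimate_reflection_PsiS:
  assumes "v \<in> PhiS (q+2) Z" "Z \<subseteq> {1..q+1}"
  shows "v(q+1 := v q + v (q+2) - v (q+1)) \<in> pm (PsiS (q+2) (Z - {q+1}))"
  using assms(1)
proof (cases rule: PhiS_cases)
  case (interval a b)
  consider "a = q+1" "b = q+1" | "a \<le> q" "b = q+1" | "b = q" | "b < q"
    using interval by linarith
  then show ?thesis
  proof cases
    case 1 with interval show ?thesis by (intro in_pmI_uminus PsiS_intervalI[of "q+1" "q+1"]) auto
  next
    case 2 with interval show ?thesis by (intro in_pmI PsiS_intervalI[of a q]) auto
  next
    case 3 with interval show ?thesis by (intro in_pmI PsiS_intervalI[of a "q+1"]) auto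
  next
    case 4 with interval show ?thesis by (intro in_pmI PsiS_intervalI[of a b]) auto
  qed
next
  case (tip a)
  then consider "a = q+1" | "a \<le> q"
    by linarith
  then show ?thesis
  proof cases
    case 1 with tip show ?thesis by (intro in_pmI PsiS_intervalI[of "q+1" "q+2"]) auto
  next
    case 2 with tip show ?thesis by (intro in_pmI PsiS_mixedI[of a "q+1"]) auto
  qed
next
  case (mixed a c)
  then consider "c = q+1" | "c \<le> q"
    by linarith
  then show ?thesis
  proof cases
    case 1 with mixed show ?thesis by (intro in_pmI PsiS_intervalI[of a "q+2"]) auto
  next
    case 2 with mixed show ?thesis by (intro in_pmI PsiS_mixedI[of a c]) auto
  qed
next
  case (double c)
  have "1 \<le> c" "c \<le> q+1"
    using double(1) assms(2) by auto
  then consider "c = q+1" | "1 \<le> c" "c \<le> q"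
    by linarith
  then show ?thesis
  proof cases
    case 1 with double show ?thesis by (intro in_pmI PsiS_intervalI[of "q+2" "q+2"]) auto
  next
    case 2 with double show ?thesis by (intro in_pmI PsiS_doubleI[of c]) auto
  qed
qed

lemma PsiS_penultimate_reflection_PhiS:
  assumes "v \<in> PsiS (q+2) Y" "q+1 \<notin> Y" "Y \<subseteq> {1..q+1}"
  shows "v(q+1 := v q + v (q+2) - v (q+1)) \<in> pm (PhiS (q+2) (Y \<union> {q+1}))"
  using assms(1)
proof (cases rule: PsiS_cases)
  case (interval a b)
  consider "a = q+2" | "a = q+1" "b = q+2" | "a \<le> q" "b = q+2" | "a = q+1" "b = q+1"
    | "a \<le> q" "b = q+1" | "b = q" | "b < q"
    using interval by linarith
  then show ?thesis
  proof cases
    case 1 with interval show ?thesis by (intro in_pmI PhiS_doubleI[of "q+1"]) auto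
  next
    case 2 with interval show ?thesis by (intro in_pmI PhiS_tipI[of "q+1"]) auto
  next
    case 3 with interval show ?thesis by (intro in_pmI PhiS_mixedI[of a "q+1"]) auto
  next
    case 4 with interval show ?thesis by (intro in_pmI_uminus PhiS_intervalI[of "q+1" "q+1"]) auto
  next
    case 5 with interval show ?thesis by (intro in_pmI PhiS_intervalI[of a q]) auto
  next
    case 6 with interval show ?thesis by (intro in_pmI PhiS_intervalI[of a "q+1"]) auto
  next
    case 7 with interval show ?thesis by (intro in_pmI PhiS_intervalI[of a b]) auto
  qed
next
  case (mixed a c)
  then consider "c = q+1" | "c \<le> q"
    by linarith
  then show ?thesis
  proof cases
    case 1 with mixed show ?thesis by (intro in_pmI PhiS_tipI[of a]) auto
  next
    case 2 with mixed show ?thesis by (intro in_pmI PhiS_mixedI[of a c]) auto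
  qed
next
  case (double c)
  have "1 \<le> c" "c \<le> q"
    using double(1) assms(2,3) by (auto simp: le_Suc_eq)
  with double show ?thesis
    by (intro in_pmI PhiS_doubleI[of c]) auto
qed

lemma PhiS_penultimate_reflection_PhiS:
  assumes "v \<in> PhiS (q+2) Z" "q+1 \<notin> Z" "Z \<subseteq> {1..q+1}"
  shows "v(q+1 := v q - v (q+1)) \<in> pm (PhiS (q+2) Z)"
  using assms(1)
proof (cases rule: PhiS_cases)
  case (interval a b)
  consider "a = q+1" "b = q+1" | "a \<le> q" "b = q+1" | "b = q" | "b < q"
    using interval by linarith
  then show ?thesis
  proof cases
    case 1 with interval show ?thesis by (intro in_pmI_uminus PhiS_intervalI[of "q+1" "q+1"]) auto
  next
    case 2 with interval show ?thesis by (intro in_pmI PhiS_intervalI[of a q]) auto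
  next
    case 3 with interval show ?thesis by (intro in_pmI PhiS_intervalI[of a "q+1"]) auto
  next
    case 4 with interval show ?thesis by (intro in_pmI PhiS_intervalI[of a b]) auto
  qed
next
  case (tip a)
  then consider "a = q+1" | "a \<le> q"
    by linarith
  then show ?thesis
  proof cases
    case 1 with tip show ?thesis by (intro in_pmI PhiS_tipI[of "q+1"]) auto
  next
    case 2 with tip show ?thesis by (intro in_pmI PhiS_mixedI[of a "q+1"]) auto
  qed
next
  case (mixed a c)
  then consider "c = q+1" | "c \<le> q"
    by linarith
  then show ?thesis
  proof cases
    case 1 with mixed show ?thesis by (intro in_pmI PhiS_tipI[of a]) auto
  next
    case 2 with mixed show ?thesis by (intro in_pmI PhiS_mixedI[of a c]) auto
  qed
next
  case (double c)
  have "1 \<le> c" "c \<le> q"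
    using double(1) assms(2,3) by (auto simp: le_Suc_eq)
  with double show ?thesis
    by (intro in_pmI PhiS_doubleI[of c]) auto
qed

lemma PsiS_penultimate_reflection_PsiS:
  assumes "v \<in> PsiS (q+2) Y" "q+1 \<in> Y" "Y \<subseteq> {1..q+1}"
  shows "v(q+1 := v q + 2 * v (q+2) - v (q+1)) \<in> pm (PsiS (q+2) Y)"
  using assms(1)
proof (cases rule: PsiS_cases)
  case (interval a b)
  consider "a = q+2" | "a = q+1" "b = q+2" | "a \<le> q" "b = q+2" | "a = q+1" "b = q+1"
    | "a \<le> q" "b = q+1" | "b = q" | "b < q"
    using interval by linarith
  then show ?thesis
  proof cases
    case 1 with interval assms(2) show ?thesis by (intro in_pmI PsiS_doubleI[of "q+1"]) auto
  next
    case 2 with interval show ?thesis by (intro in_pmI PsiS_intervalI[of a b]) auto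
  next
    case 3 with interval show ?thesis by (intro in_pmI PsiS_mixedI[of a "q+1"]) auto
  next
    case 4 with interval show ?thesis by (intro in_pmI_uminus PsiS_intervalI[of "q+1" "q+1"]) auto
  next
    case 5 with interval show ?thesis by (intro in_pmI PsiS_intervalI[of a q]) auto
  next
    case 6 with interval show ?thesis by (intro in_pmI PsiS_intervalI[of a "q+1"]) auto
  next
    case 7 with interval show ?thesis by (intro in_pmI PsiS_intervalI[of a b]) auto
  qed
next
  case (mixed a c)
  then consider "c = q+1" | "c \<le> q"
    by linarith
  then show ?thesis
  proof cases
    case 1 with mixed show ?thesis by (intro in_pmI PsiS_intervalI[of a "q+2"]) auto
  next
    case 2 with mixed show ?thesis by (intro in_pmI PsiS_mixedI[of a c]) auto
  qed
next
  case (double c)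
  have "1 \<le> c" "c \<le> q+1"
    using double(1) assms(3) by auto
  then consider "c = q+1" | "1 \<le> c" "c \<le> q"
    by linarith
  then show ?thesis
  proof cases
    case 1 with double show ?thesis by (intro in_pmI PsiS_intervalI[of "q+2" "q+2"]) auto
  next
    case 2 with double show ?thesis by (intro in_pmI PsiS_doubleI[of c]) auto
  qed
qed

lemma PsiS_last_reflection:
  assumes "v \<in> PsiS (q+2) Y" "Y \<subseteq> {1..q+1}"
  shows "v(q+2 := v (q+1) - v (q+2)) \<in> pm (PsiS (q+2) Y)"
  using assms(1)
proof (cases rule: PsiS_cases)
  case (interval a b)
  consider "a = q+2" | "a \<le> q+1" "b = q+2" | "b = q+1" | "b \<le> q"
    using interval by linarith
  then show ?thesis
  proof cases
    case 1 with interval show ?thesis by (intro in_pmI_uminus PsiS_intervalI[of "q+2" "q+2"]) auto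
  next
    case 2 with interval show ?thesis by (intro in_pmI PsiS_intervalI[of a "q+1"]) auto
  next
    case 3 with interval show ?thesis by (intro in_pmI PsiS_intervalI[of a "q+2"]) auto
  next
    case 4 with interval show ?thesis by (intro in_pmI PsiS_intervalI[of a b]) auto
  qed
next
  case (mixed a c)
  then show ?thesis by (intro in_pmI PsiS_mixedI[of a c]) auto
next
  case (double c)
  have "c \<le> q+1"
    using double(1) assms(2) by auto
  with double show ?thesis
    by (intro in_pmI PsiS_doubleI[of c]) auto
qed

lemma sigma_pm_PsiS_chain:
  assumes "h+1 \<le> q" "Y \<subseteq> {1..q+1}"
  shows "sigma_pm (q+2) (PsiS (q+2) Y) (h+1) = pm (PsiS (q+2) (transp_set (h+1) Y))"
proof (rule sigma_pm_eqI)
  have Y': "transp_set (h+1) Y \<subseteq> {1..q+1}"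
    using assms by (intro transp_set_subset) auto
  show "sigma (q+2) (PsiS (q+2) Y) (h+1) v \<in> pm (PsiS (q+2) (transp_set (h+1) Y))"
    if "v \<in> PsiS (q+2) Y" for v
    unfolding sigma_PsiS_chain[OF assms(1)] using that assms by (rule PsiS_chain_reflection)
  show "sigma (q+2) (PsiS (q+2) Y) (h+1) v \<in> pm (PsiS (q+2) Y)"
    if "v \<in> PsiS (q+2) (transp_set (h+1) Y)" for v
    using PsiS_chain_reflection[OF that assms(1) Y']
    unfolding sigma_PsiS_chain[OF assms(1)] transp_set_involution .
qed (use assms in auto)

lemma sigma_pm_PhiS_chain:
  assumes "h+2 \<le> q" "Z \<subseteq> {1..q+1}"
  shows "sigma_pm (q+2) (PhiS (q+2) Z) (h+1) = pm (PhiS (q+2) (transp_set (h+1) Z))"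
proof (rule sigma_pm_eqI)
  have Z': "transp_set (h+1) Z \<subseteq> {1..q+1}"
    using assms by (intro transp_set_subset) auto
  show "sigma (q+2) (PhiS (q+2) Z) (h+1) v \<in> pm (PhiS (q+2) (transp_set (h+1) Z))"
    if "v \<in> PhiS (q+2) Z" for v
    unfolding sigma_PhiS_chain[OF assms] using that assms by (rule PhiS_chain_reflection)
  show "sigma (q+2) (PhiS (q+2) Z) (h+1) v \<in> pm (PhiS (q+2) Z)"
    if "v \<in> PhiS (q+2) (transp_set (h+1) Z)" for v
    using PhiS_chain_reflection[OF that assms(1) Z']
    unfolding sigma_PhiS_chain[OF assms] transp_set_involution .
qed (use assms in auto)

lemma sigma_pm_PhiS_branch:
  assumes "q = h+1" "Z \<subseteq> {1..q+1}"
  shows "sigma_pm (q+2) (PhiS (q+2) Z) (h+1) = pm (PhiS (q+2) (transp_set (h+1) Z))"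
proof (rule sigma_pm_eqI)
  have Z': "transp_set (h+1) Z \<subseteq> {1..q+1}"
    using assms by (intro transp_set_subset) auto
  show "sigma (q+2) (PhiS (q+2) Z) (h+1) v \<in> pm (PhiS (q+2) (transp_set (h+1) Z))"
    if "v \<in> PhiS (q+2) Z" for v
    unfolding sigma_PhiS_branch[OF assms] using that assms by (rule PhiS_branch_reflection)
  show "sigma (q+2) (PhiS (q+2) Z) (h+1) v \<in> pm (PhiS (q+2) Z)"
    if "v \<in> PhiS (q+2) (transp_set (h+1) Z)" for v
    using PhiS_branch_reflection[OF that assms(1) Z']
    unfolding sigma_PhiS_branch[OF assms] transp_set_involution .
qed (use assms in auto)

lemma sigma_pm_PhiS_penultimate_in:
  assumes "q+1 \<in> Z" "Z \<subseteq> {1..q+1}" "1 \<le> q"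
  shows "sigma_pm (q+2) (PhiS (q+2) Z) (q+1) = pm (PsiS (q+2) (Z - {q+1}))"
proof (rule sigma_pm_eqI)
  have sigma_eq: "sigma (q+2) (PhiS (q+2) Z) (q+1) v = v(q+1 := v q + v (q+2) - v (q+1))" for v
    unfolding sigma_PhiS_penultimate[OF assms(3,2)] using assms(1) by simp
  show "sigma (q+2) (PhiS (q+2) Z) (q+1) v \<in> pm (PsiS (q+2) (Z - {q+1}))"
    if "v \<in> PhiS (q+2) Z" for v
    unfolding sigma_eq using that assms(2) by (rule PhiS_penultimate_reflection_PsiS)
  have "Z - {q+1} \<subseteq> {1..q+1}" "q+1 \<notin> Z - {q+1}" "(Z - {q+1}) \<union> {q+1} = Z"
    using assms by auto
  then show "sigma (q+2) (PhiS (q+2) Z) (q+1) v \<in> pm (PhiS (q+2) Z)"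
    if "v \<in> PsiS (q+2) (Z - {q+1})" for v
    using PsiS_penultimate_reflection_PhiS[OF that] unfolding sigma_eq by metis
qed auto

lemma sigma_pm_PsiS_penultimate_notin:
  assumes "q+1 \<notin> Y" "Y \<subseteq> {1..q+1}" "1 \<le> q"
  shows "sigma_pm (q+2) (PsiS (q+2) Y) (q+1) = pm (PhiS (q+2) (Y \<union> {q+1}))"
proof (rule sigma_pm_eqI)
  have sigma_eq: "sigma (q+2) (PsiS (q+2) Y) (q+1) v = v(q+1 := v q + v (q+2) - v (q+1))" for v
    unfolding sigma_PsiS_penultimate[OF assms(3)] using assms(1) by simp
  show "sigma (q+2) (PsiS (q+2) Y) (q+1) v \<in> pm (PhiS (q+2) (Y \<union> {q+1}))"
    if "v \<in> PsiS (q+2) Y" for v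
    unfolding sigma_eq using that assms(1,2) by (rule PsiS_penultimate_reflection_PhiS)
  have "Y \<union> {q+1} \<subseteq> {1..q+1}" "q+1 \<in> Y \<union> {q+1}" "(Y \<union> {q+1}) - {q+1} = Y"
    using assms by auto
  then show "sigma (q+2) (PsiS (q+2) Y) (q+1) v \<in> pm (PsiS (q+2) Y)"
    if "v \<in> PhiS (q+2) (Y \<union> {q+1})" for v
    using PhiS_penultimate_reflection_PsiS[OF that] unfolding sigma_eq by metis
qed auto

lemma sigma_pm_PhiS_penultimate_notin:
  assumes "q+1 \<notin> Z" "Z \<subseteq> {1..q+1}" "1 \<le> q"
  shows "sigma_pm (q+2) (PhiS (q+2) Z) (q+1) = pm (PhiS (q+2) Z)"
proof (rule sigma_pm_eq_selfI)
  show "sigma (q+2) (PhiS (q+2) Z) (q+1) v \<in> pm (PhiS (q+2) Z)" if "v \<in> PhiS (q+2) Z" for v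
    using PhiS_penultimate_reflection_PhiS[OF that assms(1,2)] assms(1)
    unfolding sigma_PhiS_penultimate[OF assms(3,2)] by simp
qed auto

lemma sigma_pm_PsiS_penultimate_in:
  assumes "q+1 \<in> Y" "Y \<subseteq> {1..q+1}" "1 \<le> q"
  shows "sigma_pm (q+2) (PsiS (q+2) Y) (q+1) = pm (PsiS (q+2) Y)"
proof (rule sigma_pm_eq_selfI)
  show "sigma (q+2) (PsiS (q+2) Y) (q+1) v \<in> pm (PsiS (q+2) Y)" if "v \<in> PsiS (q+2) Y" for v
    using PsiS_penultimate_reflection_PsiS[OF that assms(1,2)] assms(1)
    unfolding sigma_PsiS_penultimate[OF assms(3)] by simp
qed auto

lemma sigma_pm_PsiS_last:
  assumes "Y \<subseteq> {1..q+1}"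
  shows "sigma_pm (q+2) (PsiS (q+2) Y) (q+2) = pm (PsiS (q+2) Y)"
proof (rule sigma_pm_eq_selfI)
  show "sigma (q+2) (PsiS (q+2) Y) (q+2) v \<in> pm (PsiS (q+2) Y)" if "v \<in> PsiS (q+2) Y" for v
    unfolding sigma_PsiS_last using that assms by (rule PsiS_last_reflection)
qed auto

lemma swapc_eq_comp_transpose: "swapc (q+2) = (\<lambda>v. v \<circ> transpose (q+1) (q+2))"
  by (auto simp: fun_eq_iff swapc_def transpose_def)

lemma PhiS_comp_transpose_mem:
  assumes "v \<in> PhiS (q+2) Z" "1 \<le> q" "Z \<subseteq> {1..q+1}"
  shows "v \<circ> transpose (q+1) (q+2) \<in> PhiS (q+2) Z"
  using assms(1)
proof (cases rule: PhiS_cases)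
  case (interval a b)
  then consider "b = q+1" | "b \<le> q"
    by linarith
  then show ?thesis
  proof cases
    case 1 with interval show ?thesis by (intro PhiS_tipI[of a]) (auto simp: transpose_def)
  next
    case 2 with interval show ?thesis by (intro PhiS_intervalI[of a b]) (auto simp: transpose_def)
  qed
next
  case (tip a)
  then show ?thesis by (intro PhiS_intervalI[of a "q+1"]) (auto simp: transpose_def)
next
  case (mixed a c)
  then show ?thesis using assms(2) by (intro PhiS_mixedI[of a c]) (auto simp: transpose_def)
next
  case (double c)
  then show ?thesis using assms(2,3) by (intro PhiS_doubleI[of c]) (auto simp: transpose_def)
qed

lemma image_comp_transpose_PhiS:
  assumes "1 \<le> q" "Z \<subseteq> {1..q+1}"
  shows "(\<lambda>v. v \<circ> transpose (q+1) (q+2)) ` PhiS (q+2) Z = PhiS (q+2) Z"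
  using PhiS_comp_transpose_mem[OF _ assms]
  by (auto simp: mem_image_comp_transpose_iff)

lemma sigma_pm_PsiS_low:
  assumes "i \<in> {1..q}" "Y \<subseteq> {1..q+1}"
  shows "sigma_pm (q+2) (PsiS (q+2) Y) i = pm (PsiS (q+2) (transp_set i Y))"
proof -
  obtain h where i: "i = h+1"
    using assms(1) by (cases i) auto
  show ?thesis
    unfolding i using assms i by (intro sigma_pm_PsiS_chain) auto
qed

lemma sigma_pm_PhiS_low:
  assumes "i \<in> {1..q}" "Z \<subseteq> {1..q+1}"
  shows "sigma_pm (q+2) (PhiS (q+2) Z) i = pm (PhiS (q+2) (transp_set i Z))"
proof -
  obtain h where i: "i = h+1"
    using assms(1) by (cases i) auto
  show ?thesis
  proof (cases "h+2 \<le> q")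
    case True
    then show ?thesis
      unfolding i using assms(2) by (rule sigma_pm_PhiS_chain)
  next
    case False
    then have "q = h+1"
      using assms(1) i by auto
    then show ?thesis
      unfolding i using assms(2) by (rule sigma_pm_PhiS_branch)
  qed
qed

lemma pm_PsiS': "pm (PsiS' (q+2) Y) = swapc (q+2) ` pm (PsiS (q+2) Y)"
  unfolding PsiS'_def swapc_eq_comp_transpose by (rule pm_image_comp)

lemma swapc_image_pm_PhiS:
  assumes "1 \<le> q" "Z \<subseteq> {1..q+1}"
  shows "swapc (q+2) ` pm (PhiS (q+2) Z) = pm (PhiS (q+2) Z)"
  unfolding swapc_eq_comp_transpose pm_image_comp[symmetric] image_comp_transpose_PhiS[OF assms] ..

lemma sigma_pm_PsiS':
  "sigma_pm (q+2) (PsiS' (q+2) Y) i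
    = swapc (q+2) ` sigma_pm (q+2) (PsiS (q+2) Y) (transpose (q+1) (q+2) i)"
  unfolding PsiS'_def swapc_eq_comp_transpose by (rule sigma_pm_image_comp_transpose) auto

lemma sigma_pm_PhiS_last:
  assumes "1 \<le> q" "Z \<subseteq> {1..q+1}"
  shows "sigma_pm (q+2) (PhiS (q+2) Z) (q+2) = swapc (q+2) ` sigma_pm (q+2) (PhiS (q+2) Z) (q+1)"
  using sigma_pm_image_comp_transpose[of "q+1" "q+2" "q+2" "PhiS (q+2) Z" "q+2"]
  unfolding image_comp_transpose_PhiS[OF assms] swapc_eq_comp_transpose by simp

lemma sigma_pm_PsiS'_low:
  assumes "i \<in> {1..q}" "Y \<subseteq> {1..q+1}"
  shows "sigma_pm (q+2) (PsiS' (q+2) Y) i = pm (PsiS' (q+2) (transp_set i Y))"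
proof -
  have "transpose (q+1) (q+2) i = i"
    using assms(1) by simp
  then show ?thesis
    unfolding sigma_pm_PsiS' pm_PsiS' by (simp only: sigma_pm_PsiS_low[OF assms])
qed

theorem proposition3p12:
  fixes r :: nat and Y Z :: "nat set"
  assumes "r \<ge> 3" and "Y \<subseteq> {1..r-1}" and "Z \<subseteq> {1..r-1}"
    and "card Y < card Z" and "card Z < r"
  shows
    "(\<forall>i\<in>{1..r-2}.
        sigma_pm r (PhiS r Z) i = pm (PhiS r (transp_set i Z)) \<and>
        sigma_pm r (PsiS r Y) i = pm (PsiS r (transp_set i Y)) \<and>
        sigma_pm r (PsiS' r Y) i = pm (PsiS' r (transp_set i Y)))
   \<and> (r - 1 \<notin> Z \<longrightarrow>
        sigma_pm r (PhiS r Z) (r - 1) = pm (PhiS r Z) \<and>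
        sigma_pm r (PhiS r Z) r = pm (PhiS r Z))
   \<and> (r - 1 \<in> Z \<longrightarrow>
        sigma_pm r (PhiS r Z) (r - 1) = pm (PsiS r (Z - {r - 1})) \<and>
        sigma_pm r (PhiS r Z) r = pm (PsiS' r (Z - {r - 1})))
   \<and> (r - 1 \<notin> Y \<longrightarrow>
        sigma_pm r (PsiS r Y) (r - 1) = pm (PhiS r (Y \<union> {r - 1})) \<and>
        sigma_pm r (PsiS r Y) r = pm (PsiS r Y) \<and>
        sigma_pm r (PsiS' r Y) r = pm (PhiS r (Y \<union> {r - 1})) \<and>
        sigma_pm r (PsiS' r Y) (r - 1) = pm (PsiS' r Y))
   \<and> (r - 1 \<in> Y \<longrightarrow>
        sigma_pm r (PsiS r Y) (r - 1) = pm (PsiS r Y) \<and>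
        sigma_pm r (PsiS r Y) r = pm (PsiS r Y) \<and>
        sigma_pm r (PsiS' r Y) (r - 1) = pm (PsiS' r Y) \<and>
        sigma_pm r (PsiS' r Y) r = pm (PsiS' r Y))"
proof -
  obtain q where r: "r = q+2" and q: "1 \<le> q"
    using assms(1) by (intro that[of "r - 2"]) auto
  then have r1: "r - 1 = q+1" and r2: "r - 2 = q"
    by simp_all
  have Y: "Y \<subseteq> {1..q+1}" and Z: "Z \<subseteq> {1..q+1}"
    using assms(2,3) unfolding r1 by simp_all
  have Y': "Y \<union> {q+1} \<subseteq> {1..q+1}"
    using Y by simp
  note Phi_penultimate = sigma_pm_PhiS_penultimate_notin[OF _ Z q] sigma_pm_PhiS_penultimate_in[OF _ Z q]
  note Psi_penultimate = sigma_pm_PsiS_penultimate_notin[OF _ Y q] sigma_pm_PsiS_penultimate_in[OF _ Y q]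
  note Psi_last = sigma_pm_PsiS_last[OF Y]
  note Phi_swapc = swapc_image_pm_PhiS[OF q Z] swapc_image_pm_PhiS[OF q Y']
  show ?thesis
    unfolding r1 r2 unfolding r
  proof (intro conjI impI ballI)
    fix i assume "i \<in> {1..q}"
    then show "sigma_pm (q+2) (PhiS (q+2) Z) i = pm (PhiS (q+2) (transp_set i Z))"
      and "sigma_pm (q+2) (PsiS (q+2) Y) i = pm (PsiS (q+2) (transp_set i Y))"
      and "sigma_pm (q+2) (PsiS' (q+2) Y) i = pm (PsiS' (q+2) (transp_set i Y))"
      using Y Z by (simp_all only: sigma_pm_PhiS_low sigma_pm_PsiS_low sigma_pm_PsiS'_low)
  qed (simp_all only: sigma_pm_PhiS_last[OF q Z] sigma_pm_PsiS' transpose_apply_first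
      transpose_apply_second Phi_penultimate Psi_penultimate Psi_last Phi_swapc pm_PsiS'
      simp_thms)
qed

end
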